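(* Let $q$ be a prime power, $n\geq 2$, and let $C_1=[n,k_1,d_1]_q$ and $C_2=[n,k_2,d_2]_q$ be linear codes over $\mathbb{F}_q$ with $C_2\subset C_1$ (so that the CSS construction gives an $[[n,k,d_z/d_x]]_q$ stabilizer code with $k=k_1-k_2$, $d_z\geq d_1$, $d_x\geq d_2^{\perp}$), where $d_2^{\perp}$ is the minimum distance of the Euclidean dual $C_2^{\perp}$. Suppose that $d_1\geq 2$, $d_2^{\perp}\geq 2$, and that $C_2^{\perp}$ contains at least one nonzero codeword whose $i$th coordinate is zero. Then: (i) if $C_1$ has a minimum weight codeword with nonzero $i$th coordinate, there exists an AQECC $[[n-1,k,d_z^{P_i}/d_x^{P_i}]]_q$ with $k=k_1-k_2$, $d_z^{P_i}\geq d_1-1$ and $d_x^{P_i}\geq d_2^{\perp}$; (ii) if $C_1$ has no minimum weight codeword with nonzero $i$th coordinate, there exists an AQECC $[[n-1,k,d_z^{P_i}/d_x^{P_i}]]_q$ with $k=k_1-k_2$, $d_z^{P_i}\geq d_1$ and $d_x^{P_i}\geq d_2^{\perp}\geq 2$.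
   Context: An AQECC $[[n,k,d_z/d_x]]_q$ is a $q^k$-dimensional subspace of $\mathbb{C}^{q^n}$ correcting all qudit-flip errors up to $\lfloor (d_x-1)/2\rfloor$ and all phase-shift errors up to $\lfloor (d_z-1)/2\rfloor$. CSS construction: if $C_2\subset C_1\subseteq\mathbb{F}_q^n$ are linear of dimensions $k_2<k_1$, there is an AQECC $[[n,k_1-k_2,d_z/d_x]]_q$ with $d_z=\mathrm{wt}(C_1\setminus C_2)$ and $d_x=\mathrm{wt}(C_2^{\perp}\setminus C_1^{\perp})$. *)

theory Defs
  imports Complex_Main "HOL-Computational_Algebra.Primes"
begin

text \<open>Words of length n: functions nat => F_q vanishing at coordinates >= n.\<close>
definition words :: "nat \<Rightarrow> (nat \<Rightarrow> 'a::zero) set" where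
  "words n = {x. \<forall>j\<ge>n. x j = 0}"

definition wt :: "nat \<Rightarrow> (nat \<Rightarrow> 'a::zero) \<Rightarrow> nat" where
  "wt n x = card {j. j < n \<and> x j \<noteq> 0}"

definition linear_code :: "nat \<Rightarrow> (nat \<Rightarrow> 'a::field) set \<Rightarrow> bool" where
  "linear_code n C \<longleftrightarrow> C \<subseteq> words n \<and> (\<lambda>_. 0) \<in> C \<and>
     (\<forall>x\<in>C. \<forall>y\<in>C. (\<lambda>j. x j + y j) \<in> C) \<and>
     (\<forall>c. \<forall>x\<in>C. (\<lambda>j. c * x j) \<in> C)"

text \<open>A linear code of dimension k over F_q has exactly q^k codewords.\<close>
definition code_dim :: "(nat \<Rightarrow> 'a::finite_field) set \<Rightarrow> nat \<Rightarrow> bool" where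
  "code_dim C k \<longleftrightarrow> card C = card (UNIV :: 'a set) ^ k"

definition min_dist :: "nat \<Rightarrow> (nat \<Rightarrow> 'a::zero) set \<Rightarrow> nat" where
  "min_dist n C = Min {wt n c | c. c \<in> C \<and> c \<noteq> (\<lambda>_. 0)}"

definition dual :: "nat \<Rightarrow> (nat \<Rightarrow> 'a::field) set \<Rightarrow> (nat \<Rightarrow> 'a) set" where
  "dual n C = {x \<in> words n. \<forall>c\<in>C. (\<Sum>j<n. x j * c j) = 0}"

definition field_degree :: "'a::finite_field itself \<Rightarrow> nat" where
  "field_degree _ = (THE m. card (UNIV :: 'a set) = CHAR('a) ^ m)"

definition field_trace :: "'a::finite_field \<Rightarrow> 'a" where
  "field_trace y = (\<Sum>j<field_degree TYPE('a). y ^ (CHAR('a) ^ j))"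

text \<open>The absolute trace lands in the prime field F_p = {of_nat k | k < p}.\<close>
definition trace_nat :: "'a::finite_field \<Rightarrow> nat" where
  "trace_nat y = (THE k. k < CHAR('a) \<and> of_nat k = field_trace y)"

definition chi :: "'a::finite_field \<Rightarrow> complex" where
  "chi y = exp (2 * pi * \<i> * of_nat (trace_nat y) / of_nat CHAR('a))"

section \<open>Operators on C^(q^n), with basis indexed by words n\<close>

type_synonym 'a op = "(nat \<Rightarrow> 'a) \<Rightarrow> (nat \<Rightarrow> 'a) \<Rightarrow> complex"

definition op_mult :: "nat \<Rightarrow> 'a::finite_field op \<Rightarrow> 'a op \<Rightarrow> 'a op" where
  "op_mult n A B = (\<lambda>x y. \<Sum>z\<in>words n. A x z * B z y)"

definition op_adj :: "'a op \<Rightarrow> 'a op" where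
  "op_adj A = (\<lambda>x y. cnj (A y x))"

text \<open>Qudit-flip X(a): |y> -> |y + a>; phase-shift Z(b): |y> -> chi(b.y) |y>.\<close>
definition Xop :: "nat \<Rightarrow> (nat \<Rightarrow> 'a::finite_field) \<Rightarrow> 'a op" where
  "Xop n a = (\<lambda>x y. if x = (\<lambda>j. y j + a j) then 1 else 0)"

definition Zop :: "nat \<Rightarrow> (nat \<Rightarrow> 'a::finite_field) \<Rightarrow> 'a op" where
  "Zop n b = (\<lambda>x y. if x = y then chi (\<Sum>j<n. b j * y j) else 0)"

definition errors :: "nat \<Rightarrow> nat \<Rightarrow> nat \<Rightarrow> 'a::finite_field op set" where
  "errors n tx tz = {op_mult n (Xop n a) (Zop n b) | a b.
      a \<in> words n \<and> b \<in> words n \<and> wt n a \<le> tx \<and> wt n b \<le> tz}"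

text \<open>Orthogonal projector onto a q^k-dimensional subspace of C^(q^n).\<close>
definition is_code_projector :: "nat \<Rightarrow> nat \<Rightarrow> 'a::finite_field op \<Rightarrow> bool" where
  "is_code_projector n k P \<longleftrightarrow>
     (\<forall>x y. (x \<notin> words n \<or> y \<notin> words n) \<longrightarrow> P x y = 0) \<and>
     op_mult n P P = P \<and> op_adj P = P \<and>
     (\<Sum>x\<in>words n. P x x) = of_nat (card (UNIV :: 'a set) ^ k)"

text \<open>Knill--Laflamme error-correction condition for a set of errors.\<close>
definition corrects :: "nat \<Rightarrow> 'a::finite_field op \<Rightarrow> 'a op set \<Rightarrow> bool" where
  "corrects n P E \<longleftrightarrow> (\<forall>E1\<in>E. \<forall>E2\<in>E. \<exists>c::complex.
      op_mult n P (op_mult n (op_mult n (op_adj E1) E2) P) = (\<lambda>x y. c * P x y))"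

definition is_AQECC :: "'a::finite_field itself \<Rightarrow> nat \<Rightarrow> nat \<Rightarrow> nat \<Rightarrow> nat \<Rightarrow> 'a op \<Rightarrow> bool" where
  "is_AQECC _ n k dz dx P \<longleftrightarrow> is_code_projector n k P \<and>
     corrects n P (errors n ((dx - 1) div 2) ((dz - 1) div 2))"

end

theory Submission
  imports Defs "HOL-Number_Theory.Number_Theory" "HOL-Computational_Algebra.Polynomial"
    "HOL-Analysis.Complex_Transcendental"
begin

(*
  Since min_dist C1 >= 2, puncturing at coordinate i is injective on C1, so the punctured codes
  C2' <= C1' of length n - 1 still have q^k2 and q^k1 words, and the CSS construction applies to
  them. A nonzero word of C1' comes from a word c of C1 and has weight wt c - [c_i <> 0], which is
  at least d1 - 1, and at least d1 unless c is a minimum weight word with c_i <> 0. Inserting a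
  zero at coordinate i maps (C2')^perp weight-preservingly into C2^perp, which bounds d_x.

  The CSS construction itself is verified via Knill-Laflamme for the projector onto the coset
  states of dual C1 in dual C2, using orthogonality of the additive character
  chi = exp(2 pi i Tr(.)/p) summed over a linear code. That chi is a nontrivial character needs
  |F| = p^m, which is what makes field_degree (a THE-expression) meaningful.
*)

section \<open>The order of a finite field\<close>

definition add_closed :: "'a::monoid_add set \<Rightarrow> bool" where
  "add_closed T \<longleftrightarrow> 0 \<in> T \<and> (\<forall>a\<in>T. \<forall>b\<in>T. a + b \<in> T)"

lemma add_closed_of_nat_mult:
  fixes T :: "'a::semiring_1 set"
  shows "add_closed T \<Longrightarrow> t \<in> T \<Longrightarrow> of_nat k * t \<in> T"
  by (induction k) (auto simp: add_closed_def distrib_right)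

lemma add_closed_diff:
  fixes T :: "'a::comm_ring_prime_char set"
  assumes T: "add_closed T" and "s \<in> T" "t \<in> T"
  shows "s - t \<in> T"
proof -
  have "of_nat (CHAR('a) - 1) = (of_nat CHAR('a) - of_nat 1 :: 'a)"
    by (rule of_nat_diff) (simp add: Suc_le_eq)
  then have "- t \<in> T"
    using add_closed_of_nat_mult[OF T \<open>t \<in> T\<close>, of "CHAR('a) - 1"] by simp
  then show ?thesis
    using T \<open>s \<in> T\<close> unfolding diff_conv_add_uminus add_closed_def by blast
qed

lemma add_closed_of_nat_mult_cancel:
  fixes T :: "'a::comm_ring_prime_char set"
  assumes T: "add_closed T" and dx: "of_nat d * x \<in> T" and d: "\<not> CHAR('a) dvd d"
  shows "x \<in> T"
proof -
  have "coprime d CHAR('a)"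
    using d prime_imp_coprime[OF CHAR_prime] by (simp add: coprime_commute)
  then obtain u where "[d * u = 1] (mod CHAR('a))"
    using cong_solve_coprime_nat by auto
  then have "of_nat u * (of_nat d * x) = x"
    by (simp flip: of_nat_eq_iff_cong_CHAR add: algebra_simps)
  then show ?thesis
    using add_closed_of_nat_mult[OF T dx, of u] by simp
qed

lemma add_closed_extend:
  fixes T :: "'a::finite_field set"
  assumes T: "add_closed T"
  shows "add_closed ((\<lambda>(t, k). t + of_nat k * x) ` (T \<times> {..<CHAR('a)}))" (is "add_closed ?T'")
  unfolding add_closed_def
proof (intro conjI ballI)
  show "0 \<in> ?T'"
    using T unfolding add_closed_def by (force intro: image_eqI[of _ _ "(0, 0)"])
next
  fix a b assume "a \<in> ?T'" "b \<in> ?T'"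
  then obtain t k s l where a: "a = t + of_nat k * x" "t \<in> T"
    and b: "b = s + of_nat l * x" "s \<in> T" by auto
  have "(of_nat ((k + l) mod CHAR('a)) :: 'a) = of_nat k + of_nat l"
    unfolding of_nat_add[symmetric] of_nat_eq_iff_cong_CHAR by (simp add: cong_def)
  then have "a + b = (t + s) + of_nat ((k + l) mod CHAR('a)) * x"
    by (simp add: a b algebra_simps)
  moreover have "t + s \<in> T"
    using T a b by (auto simp: add_closed_def)
  ultimately show "a + b \<in> ?T'"
    by (force intro: image_eqI[of _ _ "(t + s, (k + l) mod CHAR('a))"])
qed

lemma card_add_closed_extend:
  fixes T :: "'a::finite_field set"
  assumes T: "add_closed T" and x: "x \<notin> T"
  shows "card ((\<lambda>(t, k). t + of_nat k * x) ` (T \<times> {..<CHAR('a)})) = CHAR('a) * card T"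
proof -
  let ?p = "CHAR('a)"
  have same_multiple: "k = l"
    if "t \<in> T" "s \<in> T" "l \<le> k" "k < ?p" "t + of_nat k * x = s + of_nat l * x" for t s k l
  proof (rule ccontr)
    assume "k \<noteq> l"
    have "of_nat (k - l) * x = s - t"
      using that by (simp add: of_nat_diff algebra_simps)
    then have "of_nat (k - l) * x \<in> T"
      using add_closed_diff[OF T] that by simp
    moreover have "\<not> ?p dvd k - l"
      using \<open>k \<noteq> l\<close> that by (auto dest: dvd_imp_le)
    ultimately show False
      using add_closed_of_nat_mult_cancel[OF T] x by blast
  qed
  have "inj_on (\<lambda>(t, k). t + of_nat k * x) (T \<times> {..<?p})"
  proof (rule inj_onI, clarify)
    fix t k s l assume *: "t \<in> T" "k < ?p" "s \<in> T" "l < ?p" "t + of_nat k * x = s + of_nat l * x"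
    then have "k = l"
      using same_multiple[of t s l k] same_multiple[of s t k l] by (cases "l \<le> k") auto
    with * show "t = s \<and> k = l" by simp
  qed
  then show ?thesis
    by (simp add: card_image card_cartesian_product)
qed

lemma card_UNIV_eq_CHAR_power_mult:
  fixes T :: "'a::finite_field set"
  assumes "add_closed T"
  shows "\<exists>m. card (UNIV :: 'a set) = CHAR('a) ^ m * card T"
  using assms
proof (induction "card (UNIV :: 'a set) - card T" arbitrary: T rule: less_induct)
  case less
  show ?case
  proof (cases "T = UNIV")
    case True
    then show ?thesis by (auto intro: exI[of _ 0])
  next
    case False
    then obtain x where x: "x \<notin> T" by auto
    define T' where "T' = (\<lambda>(t, k). t + of_nat k * x) ` (T \<times> {..<CHAR('a)})"
    have T': "add_closed T'" "card T' = CHAR('a) * card T"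
      unfolding T'_def using add_closed_extend[OF less.prems] card_add_closed_extend[OF less.prems x]
      by blast+
    have "card T > 0"
      using less.prems by (auto simp: add_closed_def card_gt_0_iff)
    then have "card T < card T'"
      using T' prime_gt_1_nat[OF CHAR_prime] by simp
    moreover have "card T' \<le> card (UNIV :: 'a set)"
      by (rule card_mono) auto
    ultimately obtain m where "card (UNIV :: 'a set) = CHAR('a) ^ m * card T'"
      using less.hyps[OF _ T'(1)] by fastforce
    then show ?thesis
      using T' by (auto intro: exI[of _ "Suc m"])
  qed
qed

lemma card_UNIV_CHAR_power: "card (UNIV :: 'a::finite_field set) = CHAR('a) ^ field_degree TYPE('a)"
proof -
  have "add_closed {0 :: 'a}"
    by (simp add: add_closed_def)
  then obtain m where m: "card (UNIV :: 'a set) = CHAR('a) ^ m"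
    using card_UNIV_eq_CHAR_power_mult by fastforce
  then have "\<exists>!m. card (UNIV :: 'a set) = CHAR('a) ^ m"
    using prime_gt_1_nat[OF CHAR_prime] power_inject_exp by metis
  then show ?thesis
    unfolding field_degree_def by (rule theI')
qed

lemma one_less_card_UNIV: "1 < card (UNIV :: 'a::finite_field set)"
proof -
  have "card {0 :: 'a, 1} \<le> card (UNIV :: 'a set)"
    by (rule card_mono) auto
  then show ?thesis by simp
qed

section \<open>The additive character\<close>

lemma field_trace_add: "field_trace (x + y) = field_trace x + field_trace (y :: 'a::finite_field)"
  unfolding field_trace_def by (simp add: freshmans_dream'[OF CHAR_prime refl] sum.distrib)

lemma field_trace_power_CHAR: "field_trace (y :: 'a::finite_field) ^ CHAR('a) = field_trace y"
proof -
  let ?p = "CHAR('a)" and ?m = "field_degree TYPE('a)"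
  define f where "f j = y ^ (?p ^ j)" for j
  have "field_trace y ^ ?p = (\<Sum>j<?m. f (Suc j))"
    unfolding field_trace_def freshmans_dream_sum[OF CHAR_prime refl]
    by (simp add: f_def flip: power_mult) (simp add: mult.commute)
  also have "\<dots> = (\<Sum>j<Suc ?m. f j) - f 0"
    by (subst sum.lessThan_Suc_shift) simp
  also have "\<dots> = (\<Sum>j<?m. f j) + f ?m - f 0"
    by (simp only: sum.lessThan_Suc)
  also have "f ?m = f 0"
    using finite_field_power_card_eq_same[of y] by (simp add: f_def flip: card_UNIV_CHAR_power)
  finally show ?thesis
    by (simp add: field_trace_def f_def)
qed

lemma of_nat_power_CHAR: "(of_nat k :: 'a::comm_semiring_prime_char) ^ CHAR('a) = of_nat k"
proof (induction k)
  case (Suc k)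
  then show ?case
    using freshmans_dream[OF CHAR_prime refl, of "of_nat k" "1 :: 'a"] by (simp add: add.commute)
qed (simp add: zero_power)

lemma of_nat_eq_iff_less_CHAR:
  "a < CHAR('a) \<Longrightarrow> b < CHAR('a) \<Longrightarrow> (of_nat a :: 'a::semiring_1_cancel) = of_nat b \<longleftrightarrow> a = b"
  by (simp add: of_nat_eq_iff_cong_CHAR cong_def)

text \<open>\<open>X\<^sup>p - X\<close> has at most \<open>p\<close> roots, and the \<open>p\<close> elements of the prime field are among them.\<close>

lemma power_CHAR_eq_self_imp_of_nat:
  assumes "(z :: 'a::finite_field) ^ CHAR('a) = z"
  shows "\<exists>k<CHAR('a). of_nat k = z"
proof -
  let ?p = "CHAR('a)"
  have p1: "1 < ?p"
    using prime_gt_1_nat[OF CHAR_prime] .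
  define Q :: "'a poly" where "Q = monom 1 ?p - monom 1 1"
  define R where "R = {x. poly Q x = 0}"
  have "coeff Q ?p = 1"
    using p1 by (simp add: Q_def)
  then have Q: "Q \<noteq> 0" by auto
  have "degree Q \<le> ?p"
    unfolding Q_def using p1 by (intro degree_diff_le order.trans[OF degree_monom_le]) auto
  then have card_R: "card R \<le> ?p"
    using card_poly_roots_bound[OF Q] unfolding R_def by linarith
  have finite_R: "finite R"
    unfolding R_def using poly_roots_finite[OF Q] .
  define S where "S = (of_nat ` {..<?p} :: 'a set)"
  have S_R: "S \<subseteq> R"
    unfolding S_def R_def Q_def by (auto simp: poly_monom of_nat_power_CHAR)
  have "inj_on (of_nat :: nat \<Rightarrow> 'a) {..<?p}"
    by (rule inj_onI) (simp add: of_nat_eq_iff_less_CHAR)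
  then have "card S = ?p"
    unfolding S_def by (simp add: card_image)
  then have "S = R"
    using card_subset_eq[OF finite_R S_R] card_R card_mono[OF finite_R S_R] by linarith
  moreover have "z \<in> R"
    using assms by (simp add: R_def Q_def poly_monom)
  ultimately show ?thesis
    unfolding S_def by auto
qed

lemma trace_nat: "trace_nat y < CHAR('a) \<and> of_nat (trace_nat y) = field_trace (y :: 'a::finite_field)"
proof -
  obtain k where k: "k < CHAR('a)" "of_nat k = field_trace y"
    using power_CHAR_eq_self_imp_of_nat[OF field_trace_power_CHAR[of y]] by blast
  have "\<exists>!k. k < CHAR('a) \<and> of_nat k = field_trace y"
  proof (rule ex1I[of _ k])
    fix l assume "l < CHAR('a) \<and> of_nat l = field_trace y"
    then show "l = k"
      using k of_nat_eq_iff_less_CHAR[where 'a='a, of l k] by simp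
  qed (use k in simp)
  then show ?thesis
    unfolding trace_nat_def by (rule theI')
qed

lemmas trace_nat_less = trace_nat[THEN conjunct1]
  and of_nat_trace_nat = trace_nat[THEN conjunct2]

lemma trace_nat_add:
  "trace_nat (x + y) = (trace_nat x + trace_nat (y :: 'a::finite_field)) mod CHAR('a)"
proof -
  have "(of_nat (trace_nat (x + y)) :: 'a) = of_nat (trace_nat x + trace_nat y)"
    by (simp only: of_nat_add of_nat_trace_nat field_trace_add)
  then have "[trace_nat (x + y) = trace_nat x + trace_nat y] (mod CHAR('a))"
    by (simp only: of_nat_eq_iff_cong_CHAR)
  then show ?thesis
    using trace_nat_less[of "x + y"] by (simp add: cong_def)
qed

lemma chi_eq_root_of_unity:
  "chi (y :: 'a::finite_field) = exp (2 * of_real pi * \<i> * of_nat (trace_nat y) / of_nat CHAR('a))"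
  by (simp add: chi_def)

lemma chi_add: "chi (x + y) = chi x * chi (y :: 'a::finite_field)"
proof -
  let ?e = "\<lambda>k. exp (2 * of_real pi * \<i> * of_nat k / of_nat CHAR('a))"
  have "chi x * chi y = ?e (trace_nat x + trace_nat y)"
    by (simp add: chi_eq_root_of_unity add_divide_distrib distrib_left flip: exp_add)
  also have "\<dots> = ?e ((trace_nat x + trace_nat y) mod CHAR('a))"
    using complex_root_unity_eq[of "CHAR('a)" "trace_nat x + trace_nat y"] by (simp add: Suc_le_eq)
  finally show ?thesis
    by (simp add: chi_eq_root_of_unity trace_nat_add)
qed

lemma chi_nonzero: "chi y \<noteq> 0"
  by (simp add: chi_def)

lemma chi_zero [simp]: "chi (0 :: 'a::finite_field) = 1"
  using chi_add[of "0 :: 'a" 0] chi_nonzero[of "0 :: 'a"] by auto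

lemma chi_uminus: "chi (- y) = cnj (chi (y :: 'a::finite_field))"
proof -
  have inv: "cnj (chi y) * chi y = 1"
    by (simp add: chi_eq_root_of_unity exp_cnj flip: exp_add)
  have "chi (- y) = chi (- y) * (cnj (chi y) * chi y)"
    by (simp add: inv)
  also have "\<dots> = cnj (chi y) * chi (- y + y)"
    by (simp only: chi_add mult_ac)
  finally show ?thesis
    by simp
qed

lemma chi_eq_1_iff: "chi y = 1 \<longleftrightarrow> field_trace (y :: 'a::finite_field) = 0"
proof -
  have "chi y = 1 \<longleftrightarrow> CHAR('a) dvd trace_nat y"
    unfolding chi_eq_root_of_unity using complex_root_unity_eq_1 CHAR_pos by (simp add: Suc_le_eq)
  also have "\<dots> \<longleftrightarrow> trace_nat y = 0"
    using trace_nat[of y] by (auto dest: dvd_imp_le)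
  also have "\<dots> \<longleftrightarrow> field_trace y = 0"
    using trace_nat[of y] of_nat_eq_iff_less_CHAR[where 'a='a, of "trace_nat y" 0] by simp
  finally show ?thesis .
qed

text \<open>The trace is a nonzero polynomial of degree \<open>p ^ (m - 1) < q\<close>, so it cannot vanish on all of \<open>F_q\<close>.\<close>

lemma field_trace_nonzero: "\<exists>y :: 'a::finite_field. field_trace y \<noteq> 0"
proof (rule ccontr)
  assume all_zero: "\<not> ?thesis"
  let ?p = "CHAR('a)" and ?m = "field_degree TYPE('a)"
  have p1: "1 < ?p"
    using prime_gt_1_nat[OF CHAR_prime] .
  have m0: "?m > 0"
    using one_less_card_UNIV[where 'a='a] by (rule contrapos_pp) (simp add: card_UNIV_CHAR_power)
  define T :: "'a poly" where "T = (\<Sum>j<?m. monom 1 (?p ^ j))"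
  have "degree T \<le> ?p ^ (?m - 1)"
    unfolding T_def using p1
    by (intro degree_sum_le order.trans[OF degree_monom_le] power_increasing) auto
  moreover have "coeff T (?p ^ (?m - 1)) = 1"
  proof -
    have "coeff T (?p ^ (?m - 1)) = (\<Sum>j\<in>{?m - 1}. 1)"
      unfolding T_def coeff_sum
      by (rule sum.mono_neutral_cong_right) (use m0 p1 power_inject_exp in auto)
    then show ?thesis by simp
  qed
  ultimately have "card {x. poly T x = 0} \<le> ?p ^ (?m - 1)"
    using card_poly_roots_bound[of T] by fastforce
  moreover have "{x. poly T x = 0} = UNIV"
    using all_zero by (simp add: T_def poly_sum poly_monom field_trace_def)
  moreover have "?p ^ (?m - 1) < ?p ^ ?m"
    using p1 m0 by simp
  ultimately show False
    by (simp add: card_UNIV_CHAR_power)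
qed

lemma chi_nontrivial: "\<exists>t :: 'a::finite_field. chi t \<noteq> 1"
  using field_trace_nonzero chi_eq_1_iff by blast

section \<open>Linear codes and duality\<close>

definition dot :: "nat \<Rightarrow> (nat \<Rightarrow> 'a::comm_ring_1) \<Rightarrow> (nat \<Rightarrow> 'a) \<Rightarrow> 'a" where
  "dot n x y = (\<Sum>j<n. x j * y j)"

lemma dot_commute: "dot n x y = dot n y x"
  by (simp add: dot_def mult.commute)

lemma dot_add_left: "dot n (\<lambda>j. x j + y j) z = dot n x z + dot n y z"
  by (simp add: dot_def distrib_right sum.distrib)

lemma dot_add_right: "dot n z (\<lambda>j. x j + y j) = dot n z x + dot n z y"
  by (simp add: dot_def distrib_left sum.distrib)

lemma dot_diff_left: "dot n (\<lambda>j. x j - y j) z = dot n x z - dot n y z"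
  by (simp add: dot_def left_diff_distrib sum_subtractf)

lemma dot_scale_left: "dot n (\<lambda>j. c * x j) z = c * dot n x z"
  by (simp add: dot_def sum_distrib_left mult.assoc)

lemma dot_scale_right: "dot n z (\<lambda>j. c * x j) = c * dot n z x"
  by (simp add: dot_def sum_distrib_left mult.left_commute)

lemma dot_zero_left [simp]: "dot n (\<lambda>_. 0) y = 0"
  by (simp add: dot_def)

lemma dot_unit_vector: "j < n \<Longrightarrow> dot n x (\<lambda>l. if l = j then 1 else 0) = x j"
  unfolding dot_def by (subst sum.cong[OF refl, of _ _ "\<lambda>l. if l = j then x l else 0"]) auto

lemma words_eq_image_PiE:
  "words n = (\<lambda>f j. if j < n then f j else 0) ` PiE {..<n} (\<lambda>_. UNIV)"
proof safe
  fix x :: "nat \<Rightarrow> 'a" assume "x \<in> words n"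
  then have "x = (\<lambda>j. if j < n then restrict x {..<n} j else 0)"
    by (auto simp: words_def fun_eq_iff)
  then show "x \<in> (\<lambda>f j. if j < n then f j else 0) ` PiE {..<n} (\<lambda>_. UNIV)"
    by (rule image_eqI[where x = "restrict x {..<n}"]) simp
qed (auto simp: words_def)

lemma finite_words [simp]: "finite (words n :: (nat \<Rightarrow> 'a::{finite, zero}) set)"
  unfolding words_eq_image_PiE by (intro finite_imageI finite_PiE) auto

lemma card_words: "card (words n :: (nat \<Rightarrow> 'a::{finite, zero}) set) = card (UNIV :: 'a set) ^ n"
proof -
  have "inj_on (\<lambda>f j. if j < n then f j else (0 :: 'a)) (PiE {..<n} (\<lambda>_. UNIV))"
  proof (rule inj_onI, rule ext)
    fix f g :: "nat \<Rightarrow> 'a" and j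
    assume f: "f \<in> PiE {..<n} (\<lambda>_. UNIV)" and g: "g \<in> PiE {..<n} (\<lambda>_. UNIV)"
      and eq: "(\<lambda>j. if j < n then f j else 0) = (\<lambda>j. if j < n then g j else 0)"
    show "f j = g j"
    proof (cases "j < n")
      case True
      then show ?thesis using fun_cong[OF eq, of j] by simp
    next
      case False
      then show ?thesis using PiE_arb[OF f, of j] PiE_arb[OF g, of j] by simp
    qed
  qed
  then show ?thesis
    unfolding words_eq_image_PiE by (simp add: card_image card_PiE)
qed

lemma linear_code_words: "linear_code n (words n)"
  by (auto simp: linear_code_def words_def)

lemma linear_code_subset_words: "linear_code n C \<Longrightarrow> C \<subseteq> words n"
  by (simp add: linear_code_def)

lemma linear_code_zero: "linear_code n C \<Longrightarrow> (\<lambda>_. 0) \<in> C"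
  by (simp add: linear_code_def)

lemma linear_code_add: "linear_code n C \<Longrightarrow> x \<in> C \<Longrightarrow> y \<in> C \<Longrightarrow> (\<lambda>j. x j + y j) \<in> C"
  by (simp add: linear_code_def)

lemma linear_code_scale: "linear_code n C \<Longrightarrow> x \<in> C \<Longrightarrow> (\<lambda>j. c * x j) \<in> C"
  by (simp add: linear_code_def)

lemma linear_code_diff:
  assumes "linear_code n C" "x \<in> C" "y \<in> C"
  shows "(\<lambda>j. x j - y j) \<in> C"
  using linear_code_add[OF assms(1,2) linear_code_scale[OF assms(1,3), of "- 1"]] by simp

lemma linear_code_diff_add:
  assumes "linear_code n C" "(\<lambda>j. x j - y j) \<in> C" "y \<in> C"
  shows "x \<in> C"
  using linear_code_add[OF assms] by simp

lemma linear_code_diff_commute: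
  assumes "linear_code n C" "(\<lambda>j. x j - y j) \<in> C"
  shows "(\<lambda>j. y j - x j) \<in> C"
  using linear_code_scale[OF assms, of "- 1"] by simp

lemma linear_code_diff_trans:
  assumes "linear_code n C" "(\<lambda>j. x j - y j) \<in> C" "(\<lambda>j. y j - z j) \<in> C"
  shows "(\<lambda>j. x j - z j) \<in> C"
  using linear_code_add[OF assms] by simp

lemma finite_linear_code: "linear_code n (C :: (nat \<Rightarrow> 'a::finite_field) set) \<Longrightarrow> finite C"
  using finite_subset[OF linear_code_subset_words finite_words] .

lemma card_linear_code_pos: "linear_code n (C :: (nat \<Rightarrow> 'a::finite_field) set) \<Longrightarrow> card C > 0"
  using finite_linear_code linear_code_zero card_gt_0_iff by blast

lemma sum_chi_dot_linear_code:
  fixes C :: "(nat \<Rightarrow> 'a::finite_field) set"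
  assumes C: "linear_code n C"
  shows "(\<Sum>c\<in>C. chi (dot n b c)) = (if \<forall>c\<in>C. dot n b c = 0 then of_nat (card C) else 0)"
proof (cases "\<forall>c\<in>C. dot n b c = 0")
  case False
  then obtain c1 where c1: "c1 \<in> C" "dot n b c1 \<noteq> 0" by auto
  obtain t :: 'a where t: "chi t \<noteq> 1"
    using chi_nontrivial by blast
  define c0 where "c0 = (\<lambda>j. (t / dot n b c1) * c1 j)"
  have c0: "c0 \<in> C" "dot n b c0 = t"
    unfolding c0_def using linear_code_scale[OF C c1(1)] c1(2) by (simp_all only: dot_scale_right) simp
  let ?S = "\<Sum>c\<in>C. chi (dot n b c)"
  have "?S = (\<Sum>c\<in>C. chi (dot n b (\<lambda>j. c j + c0 j)))"
    by (rule sum.reindex_bij_witness[of _ "\<lambda>c j. c j + c0 j" "\<lambda>c j. c j - c0 j"])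
       (use linear_code_add[OF C _ c0(1)] linear_code_diff[OF C _ c0(1)] in auto)
  also have "\<dots> = chi t * ?S"
    by (simp add: dot_add_right chi_add c0(2) sum_distrib_left mult.commute)
  finally have "(1 - chi t) * ?S = 0"
    by (simp add: algebra_simps)
  with t have "?S = 0" by simp
  then show ?thesis
    by (simp only: if_not_P[OF False])
qed simp

lemma dual_subset_words: "dual n C \<subseteq> words n"
  by (auto simp: dual_def)

lemma mem_dual_iff: "x \<in> dual n C \<longleftrightarrow> x \<in> words n \<and> (\<forall>c\<in>C. dot n x c = 0)"
  by (simp add: dual_def dot_def)

lemma dual_antimono: "A \<subseteq> B \<Longrightarrow> dual n B \<subseteq> dual n A"
  unfolding subset_iff mem_dual_iff by blast

lemma linear_code_dual: "linear_code n (dual n C)"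
  by (auto simp: linear_code_def mem_dual_iff words_def dot_add_left dot_scale_left)

lemma dual_words_eq_zero: "dual n (words n) = {\<lambda>_. 0 :: 'a::field}"
proof safe
  fix x :: "nat \<Rightarrow> 'a" assume x: "x \<in> dual n (words n)"
  show "x = (\<lambda>_. 0)"
  proof
    fix j
    show "x j = 0"
    proof (cases "j < n")
      case True
      then have "(\<lambda>l. if l = j then 1 else 0) \<in> words n"
        by (simp add: words_def)
      with x True show ?thesis
        by (auto simp: mem_dual_iff dot_unit_vector)
    qed (use x in \<open>auto simp: mem_dual_iff words_def\<close>)
  qed
qed (simp add: mem_dual_iff words_def dot_def)

text \<open>Counting \<open>\<Sum>\<^sub>x \<Sum>\<^sub>c \<chi>(x \<cdot> c)\<close> over \<open>x \<in> F\<^sub>q\<^sup>n\<close>, \<open>c \<in> C\<close> in both orders.\<close>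

lemma card_mult_card_dual:
  fixes C :: "(nat \<Rightarrow> 'a::finite_field) set"
  assumes C: "linear_code n C"
  shows "card C * card (dual n C) = card (UNIV :: 'a set) ^ n"
proof -
  let ?W = "words n :: (nat \<Rightarrow> 'a) set"
  have "(\<Sum>x\<in>?W. \<Sum>c\<in>C. chi (dot n x c)) = (\<Sum>x\<in>?W. if x \<in> dual n C then of_nat (card C) else 0)"
    by (rule sum.cong) (auto simp: sum_chi_dot_linear_code[OF C] mem_dual_iff)
  also have "\<dots> = of_nat (card (dual n C) * card C)"
    using dual_subset_words[of n C] by (simp add: sum.If_cases Int_absorb1)
  finally have by_words: "(\<Sum>x\<in>?W. \<Sum>c\<in>C. chi (dot n x c)) = of_nat (card (dual n C) * card C)" .
  have "(\<Sum>x\<in>?W. \<Sum>c\<in>C. chi (dot n x c)) = (\<Sum>c\<in>C. \<Sum>x\<in>?W. chi (dot n c x))"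
    by (subst sum.swap) (simp add: dot_commute)
  also have "\<dots> = (\<Sum>c\<in>C. if c = (\<lambda>_. 0) then of_nat (card ?W) else 0)"
  proof (rule sum.cong[OF refl])
    fix c assume "c \<in> C"
    then have "c \<in> ?W"
      using linear_code_subset_words[OF C] by auto
    then have "(\<forall>x\<in>?W. dot n c x = 0) \<longleftrightarrow> c \<in> dual n ?W"
      by (simp add: mem_dual_iff)
    also have "\<dots> \<longleftrightarrow> c = (\<lambda>_. 0)"
      by (simp add: dual_words_eq_zero)
    finally have "(\<forall>x\<in>?W. dot n c x = 0) \<longleftrightarrow> c = (\<lambda>_. 0)" .
    then show "(\<Sum>x\<in>?W. chi (dot n c x)) = (if c = (\<lambda>_. 0) then of_nat (card ?W) else 0)"
      by (simp only: sum_chi_dot_linear_code[OF linear_code_words])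
  qed
  also have "\<dots> = of_nat (card ?W)"
    using linear_code_zero[OF C] finite_linear_code[OF C] by simp
  finally have "card (dual n C) * card C = card ?W"
    using by_words by (simp only: of_nat_eq_iff)
  then show ?thesis
    by (simp add: card_words mult.commute)
qed

lemma dual_dual:
  fixes C :: "(nat \<Rightarrow> 'a::finite_field) set"
  assumes C: "linear_code n C"
  shows "dual n (dual n C) = C"
proof -
  have sub: "C \<subseteq> dual n (dual n C)"
  proof
    fix x assume "x \<in> C"
    then show "x \<in> dual n (dual n C)"
      using linear_code_subset_words[OF C] dot_commute[of n x] by (auto simp: mem_dual_iff)
  qed
  have "card (dual n (dual n C)) * card (dual n C) = card C * card (dual n C)"
    using card_mult_card_dual[OF linear_code_dual[of n C]] card_mult_card_dual[OF C]
    by (simp add: mult.commute)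
  moreover have "card (dual n C) \<noteq> 0"
    using card_linear_code_pos[OF linear_code_dual, of n C] by simp
  ultimately have "card (dual n (dual n C)) = card C"
    by simp
  then show ?thesis
    using card_subset_eq[OF finite_linear_code[OF linear_code_dual] sub] by simp
qed

lemma wt_le: "wt n x \<le> n"
  unfolding wt_def by (rule order.trans[OF card_mono[of "{..<n}"]]) auto

lemma wt_eq_0_iff: "x \<in> words n \<Longrightarrow> wt n x = 0 \<longleftrightarrow> x = (\<lambda>_. 0)"
  by (auto simp: wt_def words_def fun_eq_iff) (metis not_less)

lemma wt_diff_le: "wt n (\<lambda>j. x j - y j) \<le> wt n x + wt n (y :: nat \<Rightarrow> 'a::ab_group_add)"
proof -
  have "{j. j < n \<and> x j - y j \<noteq> 0} \<subseteq> {j. j < n \<and> x j \<noteq> 0} \<union> {j. j < n \<and> y j \<noteq> 0}"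
    by auto
  then have "wt n (\<lambda>j. x j - y j) \<le> card ({j. j < n \<and> x j \<noteq> 0} \<union> {j. j < n \<and> y j \<noteq> 0})"
    unfolding wt_def by (intro card_mono) auto
  also have "\<dots> \<le> wt n x + wt n y"
    unfolding wt_def by (rule card_Un_le)
  finally show ?thesis .
qed

lemma min_dist_le_wt:
  assumes "c \<in> C" "c \<noteq> (\<lambda>_. 0)"
  shows "min_dist n C \<le> wt n c"
proof -
  have "finite {wt n c | c. c \<in> C \<and> c \<noteq> (\<lambda>_. 0)}"
    by (rule finite_subset[of _ "{..n}"]) (auto simp: wt_le)
  then show ?thesis
    unfolding min_dist_def using assms by (intro Min_le) auto
qed

section \<open>Puncturing\<close>

definition skip :: "nat \<Rightarrow> nat \<Rightarrow> nat" where
  "skip i j = (if j < i then j else Suc j)"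

definition puncture :: "nat \<Rightarrow> (nat \<Rightarrow> 'a) \<Rightarrow> nat \<Rightarrow> 'a" where
  "puncture i x = (\<lambda>j. x (skip i j))"

definition insert_zero :: "nat \<Rightarrow> (nat \<Rightarrow> 'a::zero) \<Rightarrow> nat \<Rightarrow> 'a" where
  "insert_zero i y = (\<lambda>j. if j < i then y j else if j = i then 0 else y (j - 1))"

lemma inj_skip: "inj (skip i)"
  by (auto simp: inj_on_def skip_def split: if_splits)

lemma skip_image: "i < n \<Longrightarrow> skip i ` {..<n - 1} = {..<n} - {i}"
proof safe
  fix k assume "i < n" "k < n" "k \<notin> skip i ` {..<n - 1}"
  moreover have "k \<noteq> i \<Longrightarrow> k = skip i (if k < i then k else k - 1)"
    by (auto simp: skip_def)
  moreover have "k \<noteq> i \<Longrightarrow> (if k < i then k else k - 1) < n - 1"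
    using calculation by auto
  ultimately show "k = i" by blast
qed (auto simp: skip_def split: if_splits)

lemma card_nonzero_skip:
  fixes g :: "nat \<Rightarrow> 'a::zero"
  assumes i: "i < n"
  shows "card {j. j < n \<and> g j \<noteq> 0} = card {j. j < n - 1 \<and> g (skip i j) \<noteq> 0} + (if g i \<noteq> 0 then 1 else 0)"
proof -
  let ?S = "{j. j < n \<and> g j \<noteq> 0}"
  have "?S - {i} = {j \<in> {..<n} - {i}. g j \<noteq> 0}"
    by auto
  also have "\<dots> = {j \<in> skip i ` {..<n - 1}. g j \<noteq> 0}"
    by (simp only: skip_image[OF i])
  also have "\<dots> = skip i ` {j. j < n - 1 \<and> g (skip i j) \<noteq> 0}"
    by auto
  finally have *: "card (?S - {i}) = card {j. j < n - 1 \<and> g (skip i j) \<noteq> 0}"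
    by (simp add: card_image inj_on_subset[OF inj_skip])
  show ?thesis
  proof (cases "g i = 0")
    case True
    then have "?S - {i} = ?S" by auto
    with * True show ?thesis by simp
  next
    case False
    then have "i \<in> ?S" using i by simp
    then have "card (?S - {i}) = card ?S - 1" "card ?S > 0"
      by (auto simp: card_gt_0_iff)
    with * False show ?thesis by simp
  qed
qed

lemma wt_puncture: "i < n \<Longrightarrow> wt n x = wt (n - 1) (puncture i x) + (if x i \<noteq> 0 then 1 else 0)"
  unfolding wt_def puncture_def by (rule card_nonzero_skip)

lemma insert_zero_skip [simp]: "insert_zero i y (skip i j) = y j"
  by (simp add: insert_zero_def skip_def)

lemma insert_zero_at [simp]: "insert_zero i y i = 0"
  by (simp add: insert_zero_def)

lemma insert_zero_eq_zero_iff [simp]: "insert_zero i y = (\<lambda>_. 0) \<longleftrightarrow> y = (\<lambda>_. 0)"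
proof
  assume "insert_zero i y = (\<lambda>_. 0)"
  then have "insert_zero i y (skip i j) = 0" for j
    by simp
  then show "y = (\<lambda>_. 0)"
    by auto
qed (auto simp: insert_zero_def)

lemma wt_insert_zero: "i < n \<Longrightarrow> wt n (insert_zero i y) = wt (n - 1) y"
  unfolding wt_def using card_nonzero_skip[of i n "insert_zero i y"] by simp

lemma dot_insert_zero: "i < n \<Longrightarrow> dot n (insert_zero i y) c = dot (n - 1) y (puncture i c)"
proof -
  assume i: "i < n"
  have "dot n (insert_zero i y) c = (\<Sum>j\<in>{..<n} - {i}. insert_zero i y j * c j)"
    unfolding dot_def using i by (subst sum.remove[of _ i]) auto
  also have "\<dots> = (\<Sum>j\<in>skip i ` {..<n - 1}. insert_zero i y j * c j)"
    by (simp only: skip_image[OF i])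
  also have "\<dots> = dot (n - 1) y (puncture i c)"
    by (simp add: sum.reindex inj_on_subset[OF inj_skip] dot_def puncture_def)
  finally show ?thesis .
qed

lemma insert_zero_words: "i < n \<Longrightarrow> y \<in> words (n - 1) \<Longrightarrow> insert_zero i y \<in> words n"
  by (auto simp: words_def insert_zero_def)

lemma linear_code_puncture:
  assumes C: "linear_code n C" and i: "i < n"
  shows "linear_code (n - 1) (puncture i ` C)"
proof -
  have "puncture i ` C \<subseteq> words (n - 1)"
    using linear_code_subset_words[OF C] i by (auto simp: words_def puncture_def skip_def)
  moreover have "(\<lambda>_. 0) \<in> puncture i ` C"
    using linear_code_zero[OF C] by (force simp: puncture_def)
  moreover have "(\<lambda>j. puncture i u j + puncture i v j) = puncture i (\<lambda>j. u j + v j)"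
    and "(\<lambda>j. a * puncture i u j) = puncture i (\<lambda>j. a * u j)" for u v :: "nat \<Rightarrow> 'a" and a
    by (simp_all add: puncture_def)
  ultimately show ?thesis
    unfolding linear_code_def using linear_code_add[OF C] linear_code_scale[OF C] by auto
qed

lemma inj_on_puncture:
  assumes C: "linear_code n C" and i: "i < n" and d: "min_dist n C \<ge> 2"
  shows "inj_on (puncture i) C"
proof (rule inj_onI, rule ccontr)
  fix x y assume x: "x \<in> C" and y: "y \<in> C" and eq: "puncture i x = puncture i y" and "x \<noteq> y"
  define z where "z = (\<lambda>j. x j - y j)"
  have z: "z \<in> C" "z \<noteq> (\<lambda>_. 0)"
    using linear_code_diff[OF C x y] \<open>x \<noteq> y\<close> by (auto simp: z_def fun_eq_iff)
  have "puncture i z = (\<lambda>_. 0)"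
    using eq by (simp add: z_def puncture_def fun_eq_iff)
  then have "wt n z \<le> 1"
    using wt_puncture[OF i, of z] by (simp add: wt_def)
  then show False
    using min_dist_le_wt[OF z, of n] d by simp
qed

lemma min_dist_le_wt_puncture:
  assumes i: "i < n" and c: "c \<in> C" "puncture i c \<noteq> (\<lambda>_. 0)"
  shows "min_dist n C \<le> wt (n - 1) (puncture i c) + (if c i \<noteq> 0 then 1 else 0)"
proof -
  have "c \<noteq> (\<lambda>_. 0)"
    using c(2) by (auto simp: puncture_def)
  then have "min_dist n C \<le> wt n c"
    by (rule min_dist_le_wt[OF c(1)])
  then show ?thesis
    unfolding wt_puncture[OF i, of c] .
qed

lemma min_dist_minus_1_le_wt_puncture:
  assumes "i < n" "c \<in> C" "puncture i c \<noteq> (\<lambda>_. 0)"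
  shows "min_dist n C - 1 \<le> wt (n - 1) (puncture i c)"
  using min_dist_le_wt_puncture[OF assms] by (simp split: if_splits)

lemma min_dist_le_wt_puncture_if_no_minimal_word_at:
  assumes i: "i < n" and c: "c \<in> C" "puncture i c \<noteq> (\<lambda>_. 0)"
    and no_min: "\<not> (\<exists>c\<in>C. c \<noteq> (\<lambda>_. 0) \<and> wt n c = min_dist n C \<and> c i \<noteq> 0)"
  shows "min_dist n C \<le> wt (n - 1) (puncture i c)"
proof (cases "c i = 0")
  case False
  then have "c \<noteq> (\<lambda>_. 0)" by auto
  then have "min_dist n C \<le> wt n c" "wt n c \<noteq> min_dist n C"
    using no_min c(1) False min_dist_le_wt[OF c(1)] by auto
  then have "min_dist n C < wt n c"
    by simp
  then show ?thesis
    using wt_puncture[OF i, of c] False by simp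
qed (use min_dist_le_wt_puncture[OF i c] in simp)

lemma min_dist_dual_le_wt_dual_puncture:
  assumes i: "i < n" and a: "a \<in> dual (n - 1) (puncture i ` C)" "a \<noteq> (\<lambda>_. 0)"
  shows "min_dist n (dual n C) \<le> wt (n - 1) a"
proof -
  have "insert_zero i a \<in> dual n C"
    using a(1) insert_zero_words[OF i] by (auto simp: mem_dual_iff dot_insert_zero[OF i])
  then have "min_dist n (dual n C) \<le> wt n (insert_zero i a)"
    using a(2) by (intro min_dist_le_wt) simp_all
  then show ?thesis
    by (simp only: wt_insert_zero[OF i])
qed

section \<open>The CSS construction\<close>

lemma eq_zero_if_wt_le_pred:
  assumes "x \<in> words n" "wt n x \<le> d - 1" "x \<noteq> (\<lambda>_. 0) \<Longrightarrow> d \<le> wt n x"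
  shows "x = (\<lambda>_. 0)"
proof (rule ccontr)
  assume "x \<noteq> (\<lambda>_. 0)"
  then have "wt n x = 0"
    using assms(2,3) by simp
  with \<open>x \<noteq> (\<lambda>_. 0)\<close> show False
    using wt_eq_0_iff[OF assms(1)] by simp
qed

lemma wt_diff_le_pred:
  assumes "wt n x \<le> (d - 1) div 2" "wt n (y :: nat \<Rightarrow> 'a::ab_group_add) \<le> (d - 1) div 2"
  shows "wt n (\<lambda>j. x j - y j) \<le> d - 1"
proof -
  have "(d - 1) div 2 + (d - 1) div 2 \<le> d - 1"
    by presburger
  then show ?thesis
    using wt_diff_le[of n x y] assms by linarith
qed

lemma error_entry:
  "op_mult m (Xop m a) (Zop m b) x y =
     (if y \<in> words m \<and> x = (\<lambda>j. y j + a j) then chi (dot m b y) else 0)"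
proof -
  have "op_mult m (Xop m a) (Zop m b) x y =
     (\<Sum>z\<in>words m. if z = y then (if x = (\<lambda>j. y j + a j) then chi (dot m b y) else 0) else 0)"
    unfolding op_mult_def Xop_def Zop_def dot_def by (intro sum.cong refl) auto
  then show ?thesis
    by (simp add: sum.delta)
qed

lemma error_adjoint_entry:
  "op_adj (op_mult m (Xop m a) (Zop m b)) x y =
     (if x \<in> words m \<and> y = (\<lambda>j. x j + a j) then cnj (chi (dot m b x)) else 0)"
  unfolding op_adj_def error_entry by simp

lemma error_adjoint_mult_error_entry:
  assumes a1: "a1 \<in> words m"
  shows "op_mult m (op_adj (op_mult m (Xop m a1) (Zop m b1))) (op_mult m (Xop m a2) (Zop m b2)) x y =
    (if x \<in> words m \<and> y \<in> words m \<and> (\<lambda>j. x j + a1 j) = (\<lambda>j. y j + a2 j)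
     then cnj (chi (dot m b1 x)) * chi (dot m b2 y) else 0)" (is "_ = ?v")
proof -
  have "op_mult m (op_adj (op_mult m (Xop m a1) (Zop m b1))) (op_mult m (Xop m a2) (Zop m b2)) x y =
     (\<Sum>z\<in>words m. if z = (\<lambda>j. x j + a1 j) then ?v else 0)"
    unfolding op_mult_def[of m "op_adj _"] error_adjoint_entry error_entry by (intro sum.cong refl) auto
  also have "\<dots> = (if (\<lambda>j. x j + a1 j) \<in> words m then ?v else 0)"
    by (simp add: sum.delta)
  also have "\<dots> = ?v"
    using linear_code_add[OF linear_code_words _ a1, of x] by auto
  finally show ?thesis .
qed

lemma error_adjoint_mult_error_same_shift_entry:
  assumes "a \<in> words m"
  shows "op_mult m (op_adj (op_mult m (Xop m a) (Zop m b1))) (op_mult m (Xop m a) (Zop m b2)) x z =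
    (if z = x \<and> x \<in> words m then chi (dot m (\<lambda>j. b2 j - b1 j) x) else 0)"
proof -
  have "dot m (\<lambda>j. b2 j - b1 j) x = dot m b2 x + - dot m b1 x"
    by (simp add: dot_diff_left)
  then have "cnj (chi (dot m b1 x)) * chi (dot m b2 x) = chi (dot m (\<lambda>j. b2 j - b1 j) x)"
    by (simp only: chi_add chi_uminus mult.commute)
  moreover have "(\<lambda>j. x j + a j) = (\<lambda>j. z j + a j) \<longleftrightarrow> z = x"
  proof
    assume shift: "(\<lambda>j. x j + a j) = (\<lambda>j. z j + a j)"
    show "z = x"
    proof
      fix j
      show "z j = x j"
        using fun_cong[OF shift, of j] by simp
    qed
  qed simp
  ultimately show ?thesis
    unfolding error_adjoint_mult_error_entry[OF assms] by auto
qed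

lemma error_adjoint_mult_error_nonzero_imp:
  assumes "a1 \<in> words m"
    and "op_mult m (op_adj (op_mult m (Xop m a1) (Zop m b1))) (op_mult m (Xop m a2) (Zop m b2)) w z \<noteq> 0"
  shows "(\<lambda>j. w j - z j) = (\<lambda>j. a2 j - a1 j)"
proof
  fix j
  have "(\<lambda>j. w j + a1 j) = (\<lambda>j. z j + a2 j)"
    using assms(2) unfolding error_adjoint_mult_error_entry[OF assms(1)] by (simp split: if_splits)
  from fun_cong[OF this, of j] show "w j - z j = a2 j - a1 j"
    by (simp add: algebra_simps)
qed

text \<open>For codes \<open>E \<subseteq> D\<close>, \<open>P = |E|\<^sup>-\<^sup>1 \<Sum>\<^bsub>x, y \<in> D, x - y \<in> E\<^esub> |x\<rangle>\<langle>y|\<close> is the orthogonal projector onto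
  the span of the coset states \<open>\<Sum>\<^bsub>e \<in> E\<^esub> |x + e\<rangle>\<close>, \<open>x \<in> D\<close>.\<close>

definition css_projector :: "(nat \<Rightarrow> 'a::finite_field) set \<Rightarrow> (nat \<Rightarrow> 'a) set \<Rightarrow> 'a op" where
  "css_projector E D =
     (\<lambda>x y. if x \<in> D \<and> y \<in> D \<and> (\<lambda>j. x j - y j) \<in> E then 1 / of_nat (card E) else 0)"

locale css_code =
  fixes m :: nat and E D :: "(nat \<Rightarrow> 'a::finite_field) set"
  assumes E: "linear_code m E" and D: "linear_code m D" and E_subset_D: "E \<subseteq> D"
begin

abbreviation "P \<equiv> css_projector E D"
abbreviation "W \<equiv> (words m :: (nat \<Rightarrow> 'a) set)"

lemma P_nonzero_imp: "P x y \<noteq> 0 \<Longrightarrow> x \<in> D \<and> y \<in> D \<and> (\<lambda>j. x j - y j) \<in> E"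
  by (simp add: css_projector_def split: if_splits)

lemma P_nonzero_imp_words: "P x y \<noteq> 0 \<Longrightarrow> x \<in> W \<and> y \<in> W"
  using P_nonzero_imp linear_code_subset_words[OF D] by blast

lemma P_commute: "P x y = P y x"
  using linear_code_diff_commute[OF E, of x y] linear_code_diff_commute[OF E, of y x]
  by (auto simp: css_projector_def)

lemma P_mult_P:
  "P x w * P w y =
     (if y \<in> D \<and> (\<lambda>j. x j - y j) \<in> E \<and> (\<lambda>j. w j - y j) \<in> E
      then 1 / of_nat (card E) * (1 / of_nat (card E)) else 0)"
proof (cases "y \<in> D \<and> (\<lambda>j. x j - y j) \<in> E \<and> (\<lambda>j. w j - y j) \<in> E")
  case True
  then have "x \<in> D" "w \<in> D" "(\<lambda>j. x j - w j) \<in> E"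
    using linear_code_diff_add[OF D] linear_code_diff_trans[OF E] linear_code_diff_commute[OF E]
      E_subset_D by blast+
  with True show ?thesis
    by (simp add: css_projector_def)
next
  case False
  have "P x w * P w y = 0"
  proof (rule ccontr)
    assume "P x w * P w y \<noteq> 0"
    then have "(\<lambda>j. x j - w j) \<in> E" "(\<lambda>j. w j - y j) \<in> E" "y \<in> D"
      using P_nonzero_imp[of x w] P_nonzero_imp[of w y] by auto
    then show False
      using False linear_code_diff_trans[OF E] by blast
  qed
  then show ?thesis
    unfolding if_not_P[OF False] .
qed

lemma sum_P_P_chi:
  "(\<Sum>w\<in>W. P x w * P w y * chi (dot m b w)) =
     P x y * chi (dot m b y) * (\<Sum>e\<in>E. chi (dot m b e)) / of_nat (card E)"
proof (cases "y \<in> D \<and> (\<lambda>j. x j - y j) \<in> E")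
  case True
  then have y: "y \<in> D" and xy: "(\<lambda>j. x j - y j) \<in> E" by auto
  have x: "x \<in> D"
    using linear_code_diff_add[OF D _ y] xy E_subset_D by blast
  let ?c = "1 / of_nat (card E) :: complex"
  have "(\<Sum>w\<in>W. P x w * P w y * chi (dot m b w)) =
      (\<Sum>w\<in>W. if (\<lambda>j. w j - y j) \<in> E then ?c * ?c * chi (dot m b w) else 0)"
    using y xy by (intro sum.cong refl) (simp add: P_mult_P)
  also have "\<dots> = (\<Sum>w\<in>{w\<in>W. (\<lambda>j. w j - y j) \<in> E}. ?c * ?c * chi (dot m b w))"
    by (rule sum.inter_filter[symmetric]) simp
  also have "\<dots> = (\<Sum>e\<in>E. ?c * ?c * chi (dot m b (\<lambda>j. e j + y j)))"
  proof (rule sum.reindex_bij_witness[of _ "\<lambda>e j. e j + y j" "\<lambda>w j. w j - y j"])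
    fix e assume "e \<in> E"
    then show "(\<lambda>j. e j + y j) \<in> {w \<in> W. (\<lambda>j. w j - y j) \<in> E}"
      using E_subset_D y linear_code_add[OF D, of e y] linear_code_subset_words[OF D] by auto
  qed (auto simp: linear_code_diff[OF linear_code_words])
  also have "\<dots> = ?c * ?c * chi (dot m b y) * (\<Sum>e\<in>E. chi (dot m b e))"
    by (simp add: dot_add_right chi_add sum_distrib_left sum_divide_distrib mult_ac)
  also have "\<dots> = P x y * chi (dot m b y) * (\<Sum>e\<in>E. chi (dot m b e)) / of_nat (card E)"
    using x y xy by (simp add: css_projector_def)
  finally show ?thesis .
next
  case False
  then have "P x w * P w y = 0" for w
    by (auto simp: P_mult_P)
  then have "(\<Sum>w\<in>W. P x w * P w y * chi (dot m b w)) = 0"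
    by (intro sum.neutral) simp
  moreover have "P x y = 0"
    using False by (auto simp: css_projector_def)
  ultimately show ?thesis by simp
qed

lemma is_code_projector_P:
  assumes "card D = card E * card (UNIV :: 'a set) ^ k"
  shows "is_code_projector m k P"
  unfolding is_code_projector_def
proof (intro conjI allI impI)
  show "P x y = 0" if "x \<notin> W \<or> y \<notin> W" for x y
    using that P_nonzero_imp_words by blast
  show "op_mult m P P = P"
  proof (intro ext)
    fix x y
    show "op_mult m P P x y = P x y"
      using sum_P_P_chi[of x y "\<lambda>_. 0"] card_linear_code_pos[OF E] by (simp add: op_mult_def)
  qed
  have "cnj (P y x) = P x y" for x y
    by (subst P_commute) (simp add: css_projector_def)
  then show "op_adj P = P"
    unfolding op_adj_def by blast
  have "(\<Sum>x\<in>W. P x x) = of_nat (card D) / of_nat (card E)"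
    using linear_code_zero[OF E] linear_code_subset_words[OF D]
    by (simp add: css_projector_def sum.If_cases Int_absorb1)
  then show "(\<Sum>x\<in>W. P x x) = of_nat (card (UNIV :: 'a set) ^ k)"
    using card_linear_code_pos[OF E] by (simp add: assms)
qed

lemma sandwich_diagonal:
  assumes M: "\<And>x z. M x z = (if z = x \<and> x \<in> W then chi (dot m b x) else 0)"
  shows "op_mult m P (op_mult m M P) x y =
    P x y * chi (dot m b y) * (\<Sum>e\<in>E. chi (dot m b e)) / of_nat (card E)"
proof -
  have MP: "op_mult m M P w y = chi (dot m b w) * P w y" for w
  proof -
    have "op_mult m M P w y = (\<Sum>z\<in>W. if z = w then (if w \<in> W then chi (dot m b w) * P w y else 0) else 0)"
      unfolding op_mult_def M by (intro sum.cong refl) auto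
    also have "\<dots> = chi (dot m b w) * P w y"
      using P_nonzero_imp_words[of w y] by (auto simp: sum.delta)
    finally show ?thesis .
  qed
  have "op_mult m P (op_mult m M P) x y = (\<Sum>w\<in>W. P x w * P w y * chi (dot m b w))"
    unfolding op_mult_def[of m P] MP by (simp add: mult_ac)
  also have "\<dots> = P x y * chi (dot m b y) * (\<Sum>e\<in>E. chi (dot m b e)) / of_nat (card E)"
    by (rule sum_P_P_chi)
  finally show ?thesis .
qed

lemma sandwich_shift:
  assumes M: "\<And>w z. M w z \<noteq> 0 \<Longrightarrow> (\<lambda>j. w j - z j) = a" and a: "a \<notin> D"
  shows "op_mult m P (op_mult m M P) = (\<lambda>_ _. 0)"
proof (intro ext)
  fix x y
  have "M w z * P z y = 0" if "w \<in> D" for w z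
    using M[of w z] P_nonzero_imp[of z y] linear_code_diff[OF D \<open>w \<in> D\<close>, of z] a by fastforce
  then have "op_mult m M P w y = 0" if "w \<in> D" for w
    unfolding op_mult_def using that by (intro sum.neutral ballI) simp
  then have "P x w * op_mult m M P w y = 0" for w
    using P_nonzero_imp[of x w] by (cases "w \<in> D") auto
  then show "op_mult m P (op_mult m M P) x y = 0"
    unfolding op_mult_def[of m P] by (intro sum.neutral ballI) simp
qed

lemma sandwich_phase:
  assumes M: "\<And>x z. M x z = (if z = x \<and> x \<in> W then chi (dot m b x) else 0)"
    and b: "b \<in> W" "b \<in> dual m E \<Longrightarrow> b = (\<lambda>_. 0)"
  shows "\<exists>c. op_mult m P (op_mult m M P) = (\<lambda>x y. c * P x y)"
proof (cases "b \<in> dual m E")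
  case True
  then have "op_mult m P (op_mult m M P) x y = 1 * P x y" for x y
    using sandwich_diagonal[OF M, of x y] b(2) card_linear_code_pos[OF E] by simp
  then show ?thesis by blast
next
  case False
  then have "\<not> (\<forall>e\<in>E. dot m b e = 0)"
    using b(1) by (simp add: mem_dual_iff)
  then have "(\<Sum>e\<in>E. chi (dot m b e)) = 0"
    unfolding sum_chi_dot_linear_code[OF E] by (rule if_not_P)
  then have "op_mult m P (op_mult m M P) x y = 0 * P x y" for x y
    using sandwich_diagonal[OF M, of x y] by simp
  then show ?thesis by blast
qed

text \<open>Knill--Laflamme: \<open>E\<^sub>1\<^sup>\<dagger> E\<^sub>2\<close> is, up to a phase, \<open>X(a) Z(b)\<close> with \<open>wt a < d\<^sub>x\<close> and \<open>wt b < d\<^sub>z\<close>.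
  A nonzero shift \<open>a\<close> leaves \<open>D\<close>, so \<open>P X(a) Z(b) P = 0\<close>; for \<open>a = 0\<close> the phase \<open>Z(b)\<close> either
  annihilates the code (\<open>b \<notin> E\<^sup>\<bottom>\<close>) or is trivial (\<open>b \<in> E\<^sup>\<bottom>\<close>, forcing \<open>b = 0\<close>).\<close>

lemma corrects_errors:
  assumes dx: "\<And>a. a \<in> D \<Longrightarrow> a \<noteq> (\<lambda>_. 0) \<Longrightarrow> dx \<le> wt m a"
    and dz: "\<And>b. b \<in> dual m E \<Longrightarrow> b \<noteq> (\<lambda>_. 0) \<Longrightarrow> dz \<le> wt m b"
  shows "corrects m P (errors m ((dx - 1) div 2) ((dz - 1) div 2))"
  unfolding corrects_def
proof (intro ballI)
  fix E1 E2 :: "'a op"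
  assume "E1 \<in> errors m ((dx - 1) div 2) ((dz - 1) div 2)" "E2 \<in> errors m ((dx - 1) div 2) ((dz - 1) div 2)"
  then obtain a1 b1 a2 b2 :: "nat \<Rightarrow> 'a"
    where E1: "E1 = op_mult m (Xop m a1) (Zop m b1)" and E2: "E2 = op_mult m (Xop m a2) (Zop m b2)"
      and a1: "a1 \<in> W" "wt m a1 \<le> (dx - 1) div 2" and b1: "b1 \<in> W" "wt m b1 \<le> (dz - 1) div 2"
      and a2: "a2 \<in> W" "wt m a2 \<le> (dx - 1) div 2" and b2: "b2 \<in> W" "wt m b2 \<le> (dz - 1) div 2"
    unfolding errors_def by blast
  define a where "a = (\<lambda>j. a2 j - a1 j)"
  define b where "b = (\<lambda>j. b2 j - b1 j)"
  have a: "a \<in> W" "wt m a \<le> dx - 1"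
    unfolding a_def using linear_code_diff[OF linear_code_words a2(1) a1(1)] wt_diff_le_pred a2(2) a1(2)
    by blast+
  have b: "b \<in> W" "wt m b \<le> dz - 1"
    unfolding b_def using linear_code_diff[OF linear_code_words b2(1) b1(1)] wt_diff_le_pred b2(2) b1(2)
    by blast+
  show "\<exists>c. op_mult m P (op_mult m (op_mult m (op_adj E1) E2) P) = (\<lambda>x y. c * P x y)"
  proof (cases "a2 = a1")
    case True
    show ?thesis
      unfolding E1 E2 True
    proof (rule sandwich_phase)
      show "b \<in> dual m E \<Longrightarrow> b = (\<lambda>_. 0)"
        using eq_zero_if_wt_le_pred[OF b] dz by blast
    qed (use b error_adjoint_mult_error_same_shift_entry[OF a1(1)] in \<open>simp_all add: b_def\<close>)
  next
    case False
    then have "a \<noteq> (\<lambda>_. 0)"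
      by (auto simp: a_def fun_eq_iff)
    then have "a \<notin> D"
      using eq_zero_if_wt_le_pred[OF a] dx by blast
    then have "op_mult m P (op_mult m (op_mult m (op_adj E1) E2) P) x y = 0 * P x y" for x y
      unfolding E1 E2 using sandwich_shift error_adjoint_mult_error_nonzero_imp[OF a1(1)]
      by (simp add: a_def)
    then show ?thesis by blast
  qed
qed

end

theorem css_code_is_AQECC:
  fixes C1 C2 :: "(nat \<Rightarrow> 'a::finite_field) set"
  assumes C1: "linear_code m C1" and C2: "linear_code m C2" and sub: "C2 \<subseteq> C1"
    and card: "card C1 = card C2 * card (UNIV :: 'a set) ^ k"
    and dz: "\<And>c. c \<in> C1 \<Longrightarrow> c \<noteq> (\<lambda>_. 0) \<Longrightarrow> dz \<le> wt m c"
    and dx: "\<And>c. c \<in> dual m C2 \<Longrightarrow> c \<noteq> (\<lambda>_. 0) \<Longrightarrow> dx \<le> wt m c"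
  shows "is_AQECC TYPE('a) m k dz dx (css_projector (dual m C1) (dual m C2))"
proof -
  interpret css_code m "dual m C1" "dual m C2"
    using linear_code_dual dual_antimono[OF sub] by unfold_locales
  have "card C2 * card (dual m C2) = card C2 * (card (dual m C1) * card (UNIV :: 'a set) ^ k)"
    using card_mult_card_dual[OF C1] card_mult_card_dual[OF C2] card by (simp add: mult_ac)
  then have "card (dual m C2) = card (dual m C1) * card (UNIV :: 'a set) ^ k"
    using card_linear_code_pos[OF C2] by simp
  then show ?thesis
    unfolding is_AQECC_def using is_code_projector_P corrects_errors dx dz dual_dual[OF C1] by simp
qed

section \<open>Punctured CSS codes\<close>

lemma punctured_css_code_is_AQECC:
  fixes C1 C2 :: "(nat \<Rightarrow> 'a::finite_field) set"
  assumes C1: "linear_code n C1" and C2: "linear_code n C2" and sub: "C2 \<subseteq> C1"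
    and k1: "code_dim C1 k1" and k2: "code_dim C2 k2"
    and i: "i < n" and d1: "min_dist n C1 \<ge> 2"
    and dz: "\<And>c. c \<in> C1 \<Longrightarrow> puncture i c \<noteq> (\<lambda>_. 0) \<Longrightarrow> dz \<le> wt (n - 1) (puncture i c)"
  shows "\<exists>P. is_AQECC TYPE('a) (n - 1) (k1 - k2) dz (min_dist n (dual n C2)) P"
proof -
  let ?q = "card (UNIV :: 'a set)"
  have inj: "inj_on (puncture i) C1"
    using inj_on_puncture[OF C1 i d1] .
  have "card C2 \<le> card C1"
    using card_mono[OF finite_linear_code[OF C1] sub] .
  then have "k2 \<le> k1"
    using k1 k2 one_less_card_UNIV[where 'a='a] by (simp add: code_dim_def)
  then have "card (puncture i ` C1) = card (puncture i ` C2) * ?q ^ (k1 - k2)"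
    using k1 k2 inj inj_on_subset[OF inj sub]
    by (simp add: code_dim_def card_image flip: power_add)
  then have "is_AQECC TYPE('a) (n - 1) (k1 - k2) dz (min_dist n (dual n C2))
      (css_projector (dual (n - 1) (puncture i ` C1)) (dual (n - 1) (puncture i ` C2)))"
    using linear_code_puncture[OF C1 i] linear_code_puncture[OF C2 i] sub
      dz min_dist_dual_le_wt_dual_puncture[OF i]
    by (intro css_code_is_AQECC) auto
  then show ?thesis by blast
qed

theorem theorem6:
  fixes C1 C2 :: "(nat \<Rightarrow> 'a::finite_field) set"
    and n k1 k2 i :: nat
  assumes "n \<ge> 2"
    and "linear_code n C1" and "code_dim C1 k1"
    and "linear_code n C2" and "code_dim C2 k2"
    and "C2 \<subset> C1"
    and "i < n"
    and "min_dist n C1 \<ge> 2"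
    and "min_dist n (dual n C2) \<ge> 2"
    and "\<exists>c\<in>dual n C2. c \<noteq> (\<lambda>_. 0) \<and> c i = 0"
  shows "((\<exists>c\<in>C1. c \<noteq> (\<lambda>_. 0) \<and> wt n c = min_dist n C1 \<and> c i \<noteq> 0) \<longrightarrow>
           (\<exists>dz dx (P :: 'a op). is_AQECC TYPE('a) (n - 1) (k1 - k2) dz dx P \<and>
              dz \<ge> min_dist n C1 - 1 \<and> dx \<ge> min_dist n (dual n C2)))
       \<and> (\<not> (\<exists>c\<in>C1. c \<noteq> (\<lambda>_. 0) \<and> wt n c = min_dist n C1 \<and> c i \<noteq> 0) \<longrightarrow>
           (\<exists>dz dx (P :: 'a op). is_AQECC TYPE('a) (n - 1) (k1 - k2) dz dx P \<and>
              dz \<ge> min_dist n C1 \<and> dx \<ge> min_dist n (dual n C2) \<and>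
              min_dist n (dual n C2) \<ge> 2))"
proof -
  note punctured = punctured_css_code_is_AQECC[OF assms(2,4) psubset_imp_subset[OF assms(6)] assms(3,5,7,8)]
  have "\<exists>P. is_AQECC TYPE('a) (n - 1) (k1 - k2) (min_dist n C1 - 1) (min_dist n (dual n C2)) P"
    by (rule punctured) (rule min_dist_minus_1_le_wt_puncture[OF assms(7)])
  moreover have "\<exists>P. is_AQECC TYPE('a) (n - 1) (k1 - k2) (min_dist n C1) (min_dist n (dual n C2)) P"
    if "\<not> (\<exists>c\<in>C1. c \<noteq> (\<lambda>_. 0) \<and> wt n c = min_dist n C1 \<and> c i \<noteq> 0)"
    by (rule punctured) (rule min_dist_le_wt_puncture_if_no_minimal_word_at[OF assms(7) _ _ that])
  ultimately show ?thesis
    using assms(9) by blast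
qed

end
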